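(* Let $G(n,n_1,n_2,n_3,p_1,p_2,p_3)$ be a three-layer stochastic block model network satisfying the standing assumptions below. Fix any one of the three layers as target layer, and apply ReduceEdge to all communities of the other two layers. Then the (expected) modularity of the target layer's partition in the resulting graph is strictly larger than in the original graph.
   Context: Multi-layer stochastic block model $G(n,n_1,\dots,n_L,p_1,\dots,p_L)$: a random graph on $n$ nodes with $L$ layers. For each layer $l$ the nodes are partitioned into $n_l$ planted communities of size $s_l=n/n_l$; independently for each layer, each pair of distinct nodes in a common community of layer $l$ receives an edge from layer $l$ with probability $p_l$; the graph is the simple union of all generated edges, so a pair lying in a common community of exactly the layers in a set $T$ is an edge with probability $1-\prod_{l\in T}(1-p_l)$. The partitions of different layers are independent: for any $k\ge2$ distinct layers and one community from each, their intersection has $n/(n_{l_1}\cdots n_{l_k})$ nodes (in expectation). Standing assumptions: $n_l\ge4$, $p_l\in[0.05,1]$ for every layer, and $n\ge2\prod_l n_l$. ReduceEdge on a layer $l$: for a community $i$ of layer $l$ with size $s_l$, $e^i_{ll}$ internal edges and $e^i_{lout}$ outgoing edges (edges with exactly one endpoint in $i$), set $\widehat{p^i_l}=e^i_{ll}/(\tfrac12 s_l(s_l-1))$, $\widehat{q^i_l}=e^i_{lout}/(s_l(n-s_l))$ and $q^i_l=\widehat{q^i_l}/\widehat{p^i_l}$; each internal edge of community $i$ is kept independently with probability $q^i_l$ (removed with probability $1-q^i_l$). In the model these quantities are computed from expected edge counts, giving a common retention probability $q_l$ for all communities of layer $l$; when two layers are reduced, an edge internal to communities of both is kept with probability equal to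 the product of the two retention probabilities. Modularity of a layer $l$: for a graph with $e$ edges, $Q_l=\sum_i\big(\frac{e^i_{ll}}{e}-(\frac{d^i_l}{2e})^2\big)$ with $d^i_l=2e^i_{ll}+e^i_{lout}$, all edge counts being replaced by their expected values. *)

theory Defs
  imports "HOL-Analysis.Analysis"
begin

text \<open>Layers are natural-number indices in a finite set Ls; nl l is the number of
  communities of layer l; p l its edge probability; n the number of nodes
  (taken as a real, all counts are expected values).\<close>

text \<open>Expected number of unordered pairs of distinct nodes lying in a common
  community of every layer of S: the common-community cells have size n / P,
  with P the product of the nl l over S, and there are P of them.\<close>
definition allpairs :: "real \<Rightarrow> (nat \<Rightarrow> nat) \<Rightarrow> nat set \<Rightarrow> real" where
  "allpairs n nl S = (let P = (\<Prod>l\<in>S. real (nl l)) in P * (n / P) * (n / P - 1) / 2)"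

text \<open>Expected number of pairs lying in a common community of exactly the
  layers of T (inclusion-exclusion).\<close>
definition exactpairs :: "real \<Rightarrow> (nat \<Rightarrow> nat) \<Rightarrow> nat set \<Rightarrow> nat set \<Rightarrow> real" where
  "exactpairs n nl Ls T =
     (\<Sum>S\<in>{S. T \<subseteq> S \<and> S \<subseteq> Ls}. (-1) ^ (card S - card T) * allpairs n nl S)"

text \<open>Edge probability of a pair whose exact common-community layer set is T.\<close>
definition edgeprob :: "(nat \<Rightarrow> real) \<Rightarrow> nat set \<Rightarrow> real" where
  "edgeprob p T = 1 - (\<Prod>l\<in>T. 1 - p l)"

definition e_total :: "real \<Rightarrow> (nat \<Rightarrow> nat) \<Rightarrow> nat set \<Rightarrow> (nat set \<Rightarrow> real) \<Rightarrow> real" where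
  "e_total n nl Ls w = (\<Sum>T\<in>Pow Ls. exactpairs n nl Ls T * w T)"

definition e_in :: "real \<Rightarrow> (nat \<Rightarrow> nat) \<Rightarrow> nat set \<Rightarrow> (nat set \<Rightarrow> real) \<Rightarrow> nat \<Rightarrow> real" where
  "e_in n nl Ls w l = (\<Sum>T\<in>{T\<in>Pow Ls. l \<in> T}. exactpairs n nl Ls T * w T) / real (nl l)"

definition e_out :: "real \<Rightarrow> (nat \<Rightarrow> nat) \<Rightarrow> nat set \<Rightarrow> (nat set \<Rightarrow> real) \<Rightarrow> nat \<Rightarrow> real" where
  "e_out n nl Ls w l = 2 * (\<Sum>T\<in>{T\<in>Pow Ls. l \<notin> T}. exactpairs n nl Ls T * w T) / real (nl l)"

definition retention :: "real \<Rightarrow> (nat \<Rightarrow> nat) \<Rightarrow> nat set \<Rightarrow> (nat \<Rightarrow> real) \<Rightarrow> nat \<Rightarrow> real" where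
  "retention n nl Ls p l =
     (let s = n / real (nl l);
          phat = e_in n nl Ls (edgeprob p) l / (s * (s - 1) / 2);
          qhat = e_out n nl Ls (edgeprob p) l / (s * (n - s))
      in qhat / phat)"

text \<open>Edge probability after applying ReduceEdge to all communities of the
  layers in R: an edge internal to communities of the layers T \<inter> R is kept
  with the product of their retention probabilities.\<close>
definition reduced_edgeprob ::
  "real \<Rightarrow> (nat \<Rightarrow> nat) \<Rightarrow> nat set \<Rightarrow> (nat \<Rightarrow> real) \<Rightarrow> nat set \<Rightarrow> nat set \<Rightarrow> real" where
  "reduced_edgeprob n nl Ls p R T =
     edgeprob p T * (\<Prod>l\<in>T \<inter> R. retention n nl Ls p l)"

text \<open>Expected modularity of the partition of layer l (all nl l communities
  have the same expected counts).\<close>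
definition modularity ::
  "real \<Rightarrow> (nat \<Rightarrow> nat) \<Rightarrow> nat set \<Rightarrow> (nat set \<Rightarrow> real) \<Rightarrow> nat \<Rightarrow> real" where
  "modularity n nl Ls w l =
     (\<Sum>i<nl l. e_in n nl Ls w l / e_total n nl Ls w
        - ((2 * e_in n nl Ls w l + e_out n nl Ls w l) / (2 * e_total n nl Ls w)) ^ 2)"

end

(*
  In the expected-value model all counts are sums over the exact set T of layers in which a pair of
  nodes shares communities. The modularity of the target layer t equals its inside share of edges
  minus 1/n_t, so it suffices that this share grows. ReduceEdge on a layer c multiplies the weight of
  every pair sharing a c-community by q_c, and 0 < q_c < 1 because communities are denser inside than
  between each other. Reducing the two other layers one at a time, each step raises the share of t
  provided the edges inside c-communities lie inside t-communities less often than the other edges.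
  With three layers this follows from the product structure of the pair counts,
  pair_mass (A \<union> B) * pair_mass (A \<inter> B) = pair_mass A * pair_mass B, and from the inequality
  W (A \<union> B) * W (A \<inter> B) \<le> W A * W B, the subadditivity and the monotonicity of the edge
  probability W T = 1 - \<Prod>l\<in>T. 1 - p l.
*)
theory Submission
  imports Defs
begin

section \<open>Edge probabilities\<close>

lemma edgeprob_empty [simp]: "edgeprob p {} = 0"
  by (simp add: edgeprob_def)

lemma edgeprob_singleton [simp]: "edgeprob p {l} = p l"
  by (simp add: edgeprob_def)

lemma edgeprob_nonneg:
  assumes "\<forall>l\<in>T. 0 \<le> p l \<and> p l \<le> 1"
  shows "0 \<le> edgeprob p T"
  unfolding edgeprob_def using assms by (simp add: prod_le_1)

lemma edgeprob_mono:
  assumes "finite B" "A \<subseteq> B" "\<forall>l\<in>B. 0 \<le> p l \<and> p l \<le> 1"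
  shows "edgeprob p A \<le> edgeprob p B"
proof -
  have "(\<Prod>l\<in>B. 1 - p l) = (\<Prod>l\<in>B - A. 1 - p l) * (\<Prod>l\<in>A. 1 - p l)"
    using assms by (simp add: prod.subset_diff)
  also have "\<dots> \<le> (\<Prod>l\<in>A. 1 - p l)"
    using assms by (intro mult_left_le_one_le prod_nonneg prod_le_1) auto
  finally show ?thesis unfolding edgeprob_def by simp
qed

lemma edgeprob_union_le:
  assumes "finite A" "finite B" "\<forall>l\<in>A \<union> B. 0 \<le> p l \<and> p l \<le> 1"
  shows "edgeprob p (A \<union> B) \<le> edgeprob p A + edgeprob p B"
proof -
  let ?F = "\<lambda>S. \<Prod>l\<in>S. 1 - p l"
  have F01: "0 \<le> ?F S" "?F S \<le> 1" if "S \<subseteq> A \<union> B" for S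
    using assms that by (auto intro!: prod_nonneg prod_le_1)
  have "?F A * ?F B = ?F (A \<union> B) * ?F (A \<inter> B)"
    using assms by (simp add: prod.union_inter)
  also have "\<dots> \<le> ?F (A \<union> B)"
    using F01[of "A \<union> B"] F01[of "A \<inter> B"] by (intro mult_left_le) auto
  finally have "?F A * ?F B \<le> ?F (A \<union> B)" .
  moreover have "0 \<le> (1 - ?F A) * (1 - ?F B)"
    using F01[of A] F01[of B] by simp
  ultimately show ?thesis
    unfolding edgeprob_def by (simp add: algebra_simps)
qed

lemma edgeprob_union_inter_le:
  assumes "finite A" "finite B" "\<forall>l\<in>A \<union> B. 0 \<le> p l \<and> p l \<le> 1"
  shows "edgeprob p (A \<union> B) * edgeprob p (A \<inter> B) \<le> edgeprob p A * edgeprob p B"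
proof -
  let ?F = "\<lambda>S. \<Prod>l\<in>S. 1 - p l"
  have F01: "0 \<le> ?F S" "?F S \<le> 1" if "S \<subseteq> A \<union> B" for S
    using assms that by (auto intro!: prod_nonneg prod_le_1)
  have split: "?F (S \<union> S') = ?F S * ?F S'" if "S \<inter> S' = {}" "S \<union> S' \<subseteq> A \<union> B" for S S'
    using that assms by (intro prod.union_disjoint) (auto intro: finite_subset)
  have "A \<inter> B \<union> (A - B) = A" "A \<inter> B \<union> (B - A) = B"
    by auto
  then have FA: "?F A = ?F (A \<inter> B) * ?F (A - B)" and FB: "?F B = ?F (A \<inter> B) * ?F (B - A)"
    using split[of "A \<inter> B" "A - B"] split[of "A \<inter> B" "B - A"] by auto
  have FAB: "?F (A \<union> B) = ?F A * ?F (B - A)"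
    using split[of A "B - A"] by simp
  have "edgeprob p A * edgeprob p B - edgeprob p (A \<union> B) * edgeprob p (A \<inter> B)
      = ?F (A \<inter> B) * (1 - ?F (A - B)) * (1 - ?F (B - A))"
    unfolding edgeprob_def FAB FA FB by (simp add: algebra_simps)
  moreover have "0 \<le> ?F (A \<inter> B) * (1 - ?F (A - B)) * (1 - ?F (B - A))"
    using F01[of "A \<inter> B"] F01[of "A - B"] F01[of "B - A"] by (simp add: le_supI1 le_supI2)
  ultimately show ?thesis by simp
qed

section \<open>Expected numbers of pairs\<close>

text \<open>N^2/2 times the probability that two independent uniformly random nodes share a community in
  exactly the layers of T. It counts the N diagonal pairs with weight 1/2 each, which is why it differs
  from exactpairs only at T = Ls (exactpairs_eq).\<close>
definition pair_mass :: "real \<Rightarrow> (nat \<Rightarrow> nat) \<Rightarrow> nat set \<Rightarrow> nat set \<Rightarrow> real" where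
  "pair_mass N nl Ls T =
     N\<^sup>2 / 2 * (\<Prod>l\<in>T. 1 / real (nl l)) * (\<Prod>l\<in>Ls - T. 1 - 1 / real (nl l))"

lemma allpairs_eq:
  assumes "finite S" "\<forall>l\<in>S. 0 < nl l"
  shows "allpairs N nl S = N\<^sup>2 / 2 * (\<Prod>l\<in>S. 1 / real (nl l)) - N / 2"
proof -
  have "0 < (\<Prod>l\<in>S. real (nl l))"
    using assms by (intro prod_pos) auto
  moreover have "(\<Prod>l\<in>S. 1 / real (nl l)) = 1 / (\<Prod>l\<in>S. real (nl l))"
    by (simp add: prod_dividef)
  ultimately show ?thesis
    unfolding allpairs_def Let_def by (simp add: field_simps power2_eq_square)
qed

lemma exactpairs_eq:
  assumes fin: "finite Ls" and T: "T \<subseteq> Ls" and pos: "\<forall>l\<in>Ls. 0 < nl l"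
  shows "exactpairs N nl Ls T = pair_mass N nl Ls T - (if T = Ls then N / 2 else 0)"
proof -
  let ?u = "\<lambda>l. 1 / real (nl l)"
  have finT: "finite T"
    using fin T finite_subset by blast
  have reindex: "{S. T \<subseteq> S \<and> S \<subseteq> Ls} = (\<lambda>U. T \<union> U) ` Pow (Ls - T)"
    using T by auto
  have inj: "inj_on (\<lambda>U. T \<union> U) (Pow (Ls - T))"
    by (auto simp: inj_on_def)
  have "exactpairs N nl Ls T
      = (\<Sum>U\<in>Pow (Ls - T). (-1) ^ (card (T \<union> U) - card T) * allpairs N nl (T \<union> U))"
    unfolding exactpairs_def reindex sum.reindex[OF inj] by simp
  also have "\<dots> = (\<Sum>U\<in>Pow (Ls - T).
      N\<^sup>2 / 2 * prod ?u T * ((-1) ^ card U * prod ?u U) - N / 2 * (-1) ^ card U)"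
  proof (rule sum.cong[OF refl])
    fix U assume U: "U \<in> Pow (Ls - T)"
    then have finU: "finite U" and dis: "T \<inter> U = {}"
      using fin by (auto intro: finite_subset)
    have card: "card (T \<union> U) - card T = card U"
      using card_Un_disjoint[OF finT finU dis] by simp
    have prod: "prod ?u (T \<union> U) = prod ?u T * prod ?u U"
      using prod.union_disjoint[OF finT finU dis] .
    have pairs: "allpairs N nl (T \<union> U) = N\<^sup>2 / 2 * prod ?u (T \<union> U) - N / 2"
      by (rule allpairs_eq) (use finT finU U T pos in auto)
    show "(-1) ^ (card (T \<union> U) - card T) * allpairs N nl (T \<union> U)
        = N\<^sup>2 / 2 * prod ?u T * ((-1) ^ card U * prod ?u U) - N / 2 * (-1) ^ card U"
      unfolding card pairs prod by (simp add: algebra_simps)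
  qed
  also have "\<dots> = N\<^sup>2 / 2 * prod ?u T * (\<Sum>U\<in>Pow (Ls - T). (-1) ^ card U * prod ?u U)
      - N / 2 * (\<Sum>U\<in>Pow (Ls - T). (-1) ^ card U)"
    by (simp add: sum_subtractf sum_distrib_left)
  also have "(\<Sum>U\<in>Pow (Ls - T). (-1) ^ card U * prod ?u U) = (\<Prod>l\<in>Ls - T. 1 - ?u l)"
    using prod_diff_conv_sum[of "Ls - T" "\<lambda>_. 1" ?u] fin by simp
  also have "(\<Sum>U\<in>Pow (Ls - T). (-1::real) ^ card U) = (\<Prod>l\<in>Ls - T. 1 - 1)"
    using prod_diff_conv_sum[of "Ls - T" "\<lambda>_. 1::real" "\<lambda>_. 1"] fin by simp
  also have "(\<Prod>l\<in>Ls - T. 1 - 1::real) = (if T = Ls then 1 else 0)"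
    using T fin by (auto simp: prod_zero_iff)
  finally show ?thesis
    unfolding pair_mass_def by simp
qed

lemma inverse_nat_bounds: "0 \<le> 1 / real k" "1 / real k \<le> 1"
  by (auto simp: divide_le_eq_1)

lemma pair_mass_nonneg: "0 \<le> pair_mass N nl Ls T"
  unfolding pair_mass_def using inverse_nat_bounds
  by (intro mult_nonneg_nonneg prod_nonneg) auto

lemma pair_mass_pos:
  assumes "N \<noteq> 0" "\<forall>l\<in>Ls. 1 < nl l" "T \<subseteq> Ls"
  shows "0 < pair_mass N nl Ls T"
proof -
  have "0 < 1 / real (nl l)" "0 < 1 - 1 / real (nl l)" if "l \<in> Ls" for l
  proof -
    have "1 < nl l"
      using assms(2) that by blast
    then show "0 < 1 / real (nl l)" "0 < 1 - 1 / real (nl l)"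
      by (simp_all add: divide_less_eq_1)
  qed
  then show ?thesis
    unfolding pair_mass_def using assms(1,3) by (intro mult_pos_pos prod_pos) auto
qed

lemma pair_mass_union_inter:
  assumes "finite Ls" "finite A" "finite B"
  shows "pair_mass N nl Ls (A \<union> B) * pair_mass N nl Ls (A \<inter> B)
       = pair_mass N nl Ls A * pair_mass N nl Ls B"
proof -
  let ?U = "\<lambda>S. \<Prod>l\<in>S. 1 / real (nl l)" and ?V = "\<lambda>S. \<Prod>l\<in>Ls - S. 1 - 1 / real (nl l)"
  have U: "?U (A \<union> B) * ?U (A \<inter> B) = ?U A * ?U B"
    using assms by (intro prod.union_inter)
  have "Ls - (A \<union> B) = (Ls - A) \<inter> (Ls - B)" "Ls - (A \<inter> B) = (Ls - A) \<union> (Ls - B)"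
    by auto
  then have V: "?V (A \<union> B) * ?V (A \<inter> B) = ?V A * ?V B"
    using prod.union_inter[of "Ls - A" "Ls - B" "\<lambda>l. 1 - 1 / real (nl l)"] assms
    by (simp add: mult.commute)
  have "pair_mass N nl Ls (A \<union> B) * pair_mass N nl Ls (A \<inter> B)
      = (N\<^sup>2 / 2) * (N\<^sup>2 / 2) * (?U (A \<union> B) * ?U (A \<inter> B)) * (?V (A \<union> B) * ?V (A \<inter> B))"
    unfolding pair_mass_def by (simp only: ac_simps)
  also have "\<dots> = pair_mass N nl Ls A * pair_mass N nl Ls B"
    unfolding U V pair_mass_def by (simp only: ac_simps)
  finally show ?thesis .
qed

lemma pair_mass_insert:
  assumes "finite Ls" "c \<in> Ls" "c \<notin> S" "S \<subseteq> Ls"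
  shows "(1 - 1 / real (nl c)) * pair_mass N nl Ls (insert c S) = 1 / real (nl c) * pair_mass N nl Ls S"
proof -
  let ?u = "\<lambda>l. 1 / real (nl l)"
  have fin: "finite S"
    using assms finite_subset by blast
  have "c \<in> Ls - S" "Ls - S - {c} = Ls - insert c S"
    using assms by auto
  then have V: "(\<Prod>l\<in>Ls - S. 1 - ?u l) = (1 - ?u c) * (\<Prod>l\<in>Ls - insert c S. 1 - ?u l)"
    using assms(1) prod.remove[of "Ls - S" c] by simp
  have U: "(\<Prod>l\<in>insert c S. ?u l) = ?u c * (\<Prod>l\<in>S. ?u l)"
    using fin assms(3) by simp
  show ?thesis
    unfolding pair_mass_def U V by (simp only: ac_simps)
qed

lemma sum_pair_mass_avoiding:
  assumes "finite Ls" "c \<in> Ls"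
  shows "(\<Sum>S\<in>Pow (Ls - {c}). pair_mass N nl Ls S) = N\<^sup>2 / 2 * (1 - 1 / real (nl c))"
proof -
  let ?u = "\<lambda>l. 1 / real (nl l)" and ?A = "Ls - {c}"
  have "(\<Sum>S\<in>Pow ?A. pair_mass N nl Ls S)
      = (\<Sum>S\<in>Pow ?A. N\<^sup>2 / 2 * (1 - ?u c) * (prod ?u S * (\<Prod>l\<in>?A - S. 1 - ?u l)))"
  proof (rule sum.cong[OF refl])
    fix S assume "S \<in> Pow ?A"
    then have "c \<in> Ls - S" "Ls - S - {c} = ?A - S"
      using assms by auto
    then have "(\<Prod>l\<in>Ls - S. 1 - ?u l) = (1 - ?u c) * (\<Prod>l\<in>?A - S. 1 - ?u l)"
      using assms(1) prod.remove[of "Ls - S" c] by simp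
    then show "pair_mass N nl Ls S = N\<^sup>2 / 2 * (1 - ?u c) * (prod ?u S * (\<Prod>l\<in>?A - S. 1 - ?u l))"
      unfolding pair_mass_def by (simp only: ac_simps)
  qed
  also have "\<dots> = N\<^sup>2 / 2 * (1 - ?u c) * (\<Sum>S\<in>Pow ?A. prod ?u S * (\<Prod>l\<in>?A - S. 1 - ?u l))"
    by (simp add: sum_distrib_left)
  also have "(\<Sum>S\<in>Pow ?A. prod ?u S * (\<Prod>l\<in>?A - S. 1 - ?u l)) = (\<Prod>l\<in>?A. ?u l + (1 - ?u l))"
    using prod_add[of ?A ?u "\<lambda>l. 1 - ?u l"] assms by simp
  finally show ?thesis
    by simp
qed

lemma exactpairs_pos:
  assumes "finite Ls" "T \<subseteq> Ls" "\<forall>l\<in>Ls. 1 < nl l" "(\<Prod>l\<in>Ls. real (nl l)) < N"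
  shows "0 < exactpairs N nl Ls T"
proof -
  have P: "0 < (\<Prod>l\<in>Ls. real (nl l))"
    using assms by (intro prod_pos) auto
  have "exactpairs N nl Ls T = pair_mass N nl Ls T - (if T = Ls then N / 2 else 0)"
    by (rule exactpairs_eq) (use assms in auto)
  moreover have "0 < pair_mass N nl Ls Ls - N / 2"
  proof -
    have "pair_mass N nl Ls Ls - N / 2 = N / 2 * (N / (\<Prod>l\<in>Ls. real (nl l)) - 1)"
      unfolding pair_mass_def by (simp add: prod_dividef power2_eq_square algebra_simps)
    also have "0 < \<dots>"
      using P assms(4) by (simp add: field_simps)
    finally show ?thesis .
  qed
  moreover have "0 < pair_mass N nl Ls T"
    using P assms by (intro pair_mass_pos) auto
  ultimately show ?thesis
    by (cases "T = Ls") simp_all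
qed

section \<open>Expected edge counts and modularity\<close>

definition edge_count ::
  "real \<Rightarrow> (nat \<Rightarrow> nat) \<Rightarrow> nat set \<Rightarrow> (nat set \<Rightarrow> real) \<Rightarrow> (nat set \<Rightarrow> bool) \<Rightarrow> real" where
  "edge_count N nl Ls w P = (\<Sum>T\<in>{T\<in>Pow Ls. P T}. exactpairs N nl Ls T * w T)"

definition inside_share :: "real \<Rightarrow> (nat \<Rightarrow> nat) \<Rightarrow> nat set \<Rightarrow> (nat set \<Rightarrow> real) \<Rightarrow> nat \<Rightarrow> real" where
  "inside_share N nl Ls w l = edge_count N nl Ls w (\<lambda>T. l \<in> T) / e_total N nl Ls w"

definition scale_layer :: "nat \<Rightarrow> real \<Rightarrow> (nat set \<Rightarrow> real) \<Rightarrow> nat set \<Rightarrow> real" where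
  "scale_layer c q w T = (if c \<in> T then q * w T else w T)"

lemma edge_count_eq_sum_Pow:
  assumes "finite Ls"
  shows "edge_count N nl Ls w P = (\<Sum>T\<in>Pow Ls. if P T then exactpairs N nl Ls T * w T else 0)"
  unfolding edge_count_def
  using sum.inter_filter[of "Pow Ls" "\<lambda>T. exactpairs N nl Ls T * w T" P] assms by simp

lemma edge_count_split:
  assumes "finite Ls"
  shows "edge_count N nl Ls w P
       = edge_count N nl Ls w (\<lambda>T. P T \<and> Q T) + edge_count N nl Ls w (\<lambda>T. P T \<and> \<not> Q T)"
  unfolding edge_count_eq_sum_Pow[OF assms] sum.distrib[symmetric] by (intro sum.cong) auto

lemma e_total_eq_edge_count: "e_total N nl Ls w = edge_count N nl Ls w (\<lambda>_. True)"
  unfolding e_total_def edge_count_def by (rule sum.cong) auto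

lemma e_total_split:
  assumes "finite Ls"
  shows "e_total N nl Ls w = edge_count N nl Ls w (\<lambda>T. l \<in> T) + edge_count N nl Ls w (\<lambda>T. l \<notin> T)"
  using edge_count_split[OF assms, of N nl w "\<lambda>_. True" "\<lambda>T. l \<in> T"]
  by (simp add: e_total_eq_edge_count)

lemma modularity_eq:
  assumes "finite Ls" "0 < nl l" "e_total N nl Ls w \<noteq> 0"
  shows "modularity N nl Ls w l = inside_share N nl Ls w l - 1 / real (nl l)"
proof -
  define I where "I = edge_count N nl Ls w (\<lambda>T. l \<in> T)"
  define E where "E = e_total N nl Ls w"
  have "e_in N nl Ls w l = I / real (nl l)"
    unfolding e_in_def I_def edge_count_def by simp
  moreover have "(2 * e_in N nl Ls w l + e_out N nl Ls w l) / (2 * e_total N nl Ls w) = 1 / real (nl l)"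
  proof -
    have "2 * e_in N nl Ls w l + e_out N nl Ls w l = 2 * E / real (nl l)"
      unfolding e_in_def e_out_def E_def e_total_split[OF assms(1), of N nl w l]
      by (simp add: edge_count_def add_divide_distrib)
    then show ?thesis
      using assms(3) by (simp add: E_def)
  qed
  ultimately have "modularity N nl Ls w l = real (nl l) * (I / real (nl l) / E - (1 / real (nl l))\<^sup>2)"
    unfolding modularity_def E_def by simp
  also have "\<dots> = I / E - 1 / real (nl l)"
    using assms(2) by (simp add: field_simps power2_eq_square)
  finally show ?thesis
    unfolding inside_share_def I_def E_def .
qed

lemma edge_count_scale_layer:
  assumes "finite Ls"
  shows "edge_count N nl Ls (scale_layer c q w) P
       = edge_count N nl Ls w (\<lambda>T. P T \<and> c \<notin> T) + q * edge_count N nl Ls w (\<lambda>T. P T \<and> c \<in> T)"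
  unfolding edge_count_eq_sum_Pow[OF assms] sum_distrib_left sum.distrib[symmetric]
  by (intro sum.cong) (auto simp: scale_layer_def)

lemma scale_layer_one [simp]: "scale_layer c 1 w = w"
  by (simp add: scale_layer_def fun_eq_iff)

lemma scale_layer_nonneg: "0 \<le> q \<Longrightarrow> 0 \<le> w T \<Longrightarrow> 0 \<le> scale_layer c q w T"
  by (simp add: scale_layer_def)

lemma reduced_edgeprob_two_layers:
  assumes "a \<noteq> b"
  shows "reduced_edgeprob N nl Ls p {a, b}
       = scale_layer b (retention N nl Ls p b) (scale_layer a (retention N nl Ls p a) (edgeprob p))"
  using assms by (auto simp: fun_eq_iff reduced_edgeprob_def scale_layer_def Int_insert_right)

lemma edge_count_pos:
  assumes "finite Ls" "\<forall>T\<subseteq>Ls. 0 < exactpairs N nl Ls T" "\<forall>T\<subseteq>Ls. 0 \<le> w T"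
    and "S \<subseteq> Ls" "P S" "0 < w S"
  shows "0 < edge_count N nl Ls w P"
  unfolding edge_count_def using assms
  by (intro sum_pos2[of _ S]) (auto simp: less_imp_le)

lemma e_total_pos:
  assumes "finite Ls" "\<forall>T\<subseteq>Ls. 0 < exactpairs N nl Ls T" "\<forall>T\<subseteq>Ls. 0 \<le> w T"
    and "S \<subseteq> Ls" "0 < w S"
  shows "0 < e_total N nl Ls w"
  unfolding e_total_eq_edge_count using assms by (intro edge_count_pos[where S = S]) auto

lemma mediant_shift_less:
  fixes a0 b0 a1 b1 q :: real
  assumes "0 < a0 + b0" "0 < a1 + b1" "0 < q" "q < 1" "a1 * b0 < a0 * b1"
  shows "(a0 + a1) / (a0 + a1 + (b0 + b1)) < (a0 + q * a1) / (a0 + q * a1 + (b0 + q * b1))"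
proof -
  define D1 where "D1 = a0 + a1 + (b0 + b1)"
  define D2 where "D2 = a0 + q * a1 + (b0 + q * b1)"
  have "0 < q * (a1 + b1)"
    using assms by simp
  then have den: "0 < D1" "0 < D2"
    using assms unfolding D1_def D2_def by (simp_all add: algebra_simps)
  have "(a0 + q * a1) * D1 - (a0 + a1) * D2 = (1 - q) * (a0 * b1 - a1 * b0)"
    unfolding D1_def D2_def by (simp add: algebra_simps)
  also have "0 < \<dots>"
    using assms by simp
  finally have "(a0 + a1) * D2 / (D1 * D2) < (a0 + q * a1) * D1 / (D1 * D2)"
    using den by (intro divide_strict_right_mono) simp_all
  then show ?thesis
    using den unfolding D1_def[symmetric] D2_def[symmetric] by simp
qed

text \<open>The last hypothesis says that edges inside c-communities lie inside l-communities less often than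
  the other edges, so thinning them out raises the inside share of l.\<close>
lemma inside_share_scale_layer_less:
  assumes "finite Ls" "0 < q" "q < 1"
    and "0 < edge_count N nl Ls w (\<lambda>T. c \<notin> T)" "0 < edge_count N nl Ls w (\<lambda>T. c \<in> T)"
    and "edge_count N nl Ls w (\<lambda>T. l \<in> T \<and> c \<in> T) * edge_count N nl Ls w (\<lambda>T. l \<notin> T \<and> c \<notin> T)
       < edge_count N nl Ls w (\<lambda>T. l \<in> T \<and> c \<notin> T) * edge_count N nl Ls w (\<lambda>T. l \<notin> T \<and> c \<in> T)"
  shows "inside_share N nl Ls w l < inside_share N nl Ls (scale_layer c q w) l"
proof -
  define a0 where "a0 = edge_count N nl Ls w (\<lambda>T. l \<in> T \<and> c \<notin> T)"
  define b0 where "b0 = edge_count N nl Ls w (\<lambda>T. l \<notin> T \<and> c \<notin> T)"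
  define a1 where "a1 = edge_count N nl Ls w (\<lambda>T. l \<in> T \<and> c \<in> T)"
  define b1 where "b1 = edge_count N nl Ls w (\<lambda>T. l \<notin> T \<and> c \<in> T)"
  have split: "edge_count N nl Ls w P
      = edge_count N nl Ls w (\<lambda>T. P T \<and> c \<notin> T) + edge_count N nl Ls w (\<lambda>T. P T \<and> c \<in> T)" for P
    using edge_count_split[OF assms(1), of N nl w P "\<lambda>T. c \<notin> T"] by simp
  have "edge_count N nl Ls w (\<lambda>T. c \<notin> T) = a0 + b0" "edge_count N nl Ls w (\<lambda>T. c \<in> T) = a1 + b1"
    unfolding a0_def b0_def a1_def b1_def edge_count_eq_sum_Pow[OF assms(1)] sum.distrib[symmetric]
    by (intro sum.cong; simp)+
  then have "(a0 + a1) / (a0 + a1 + (b0 + b1)) < (a0 + q * a1) / (a0 + q * a1 + (b0 + q * b1))"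
    using assms unfolding a0_def b0_def a1_def b1_def by (intro mediant_shift_less) simp_all
  moreover have "inside_share N nl Ls w l = (a0 + a1) / (a0 + a1 + (b0 + b1))"
    unfolding inside_share_def e_total_split[OF assms(1), where l = l] a0_def b0_def a1_def b1_def
    by (simp only: split[of "\<lambda>T. l \<in> T"] split[of "\<lambda>T. l \<notin> T"])
  moreover have "inside_share N nl Ls (scale_layer c q w) l = (a0 + q * a1) / (a0 + q * a1 + (b0 + q * b1))"
    unfolding inside_share_def e_total_split[OF assms(1), where l = l] edge_count_scale_layer[OF assms(1)]
      a0_def b0_def a1_def b1_def ..
  ultimately show ?thesis
    by simp
qed

section \<open>Retention probabilities\<close>

lemma edge_count_avoiding:
  assumes "finite Ls" "c \<in> Ls" "\<forall>l\<in>Ls. 0 < nl l"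
  shows "edge_count N nl Ls w (\<lambda>T. c \<notin> T) = (\<Sum>S\<in>Pow (Ls - {c}). pair_mass N nl Ls S * w S)"
  unfolding edge_count_def
proof (rule sum.cong)
  show "{T \<in> Pow Ls. c \<notin> T} = Pow (Ls - {c})"
    by auto
  fix S assume "S \<in> Pow (Ls - {c})"
  then have "S \<subseteq> Ls" "S \<noteq> Ls"
    using assms(2) by auto
  then show "exactpairs N nl Ls S * w S = pair_mass N nl Ls S * w S"
    using assms exactpairs_eq[of Ls S nl N] by simp
qed

lemma Pow_filter_mem: "c \<in> Ls \<Longrightarrow> {T \<in> Pow Ls. c \<in> T} = insert c ` Pow (Ls - {c})"
proof (intro subset_antisym subsetI)
  fix T assume "T \<in> {T \<in> Pow Ls. c \<in> T}"
  then have "T = insert c (T - {c})" "T - {c} \<in> Pow (Ls - {c})"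
    by auto
  then show "T \<in> insert c ` Pow (Ls - {c})"
    by (rule image_eqI)
qed auto

lemma edge_count_hitting:
  assumes "finite Ls" "c \<in> Ls" "\<forall>l\<in>Ls. 0 < nl l"
  shows "edge_count N nl Ls w (\<lambda>T. c \<in> T)
       = (\<Sum>S\<in>Pow (Ls - {c}). pair_mass N nl Ls (insert c S) * w (insert c S)) - N / 2 * w Ls"
proof -
  let ?A = "Ls - {c}"
  have inj: "inj_on (insert c) (Pow ?A)"
    by (auto simp: inj_on_def)
  have "edge_count N nl Ls w (\<lambda>T. c \<in> T) = (\<Sum>T\<in>insert c ` Pow ?A. exactpairs N nl Ls T * w T)"
    unfolding edge_count_def Pow_filter_mem[OF assms(2)] ..
  also have "\<dots> = (\<Sum>S\<in>Pow ?A. exactpairs N nl Ls (insert c S) * w (insert c S))"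
    by (simp only: sum.reindex[OF inj] comp_def)
  also have "\<dots> = (\<Sum>S\<in>Pow ?A. pair_mass N nl Ls (insert c S) * w (insert c S)
      - (if S = ?A then N / 2 * w (insert c S) else 0))"
  proof (rule sum.cong[OF refl])
    fix S assume S: "S \<in> Pow ?A"
    then have "insert c S \<subseteq> Ls" "insert c S = Ls \<longleftrightarrow> S = ?A"
      using assms(2) by auto
    then have "exactpairs N nl Ls (insert c S) = pair_mass N nl Ls (insert c S) - (if S = ?A then N / 2 else 0)"
      using assms exactpairs_eq[of Ls "insert c S" nl N] by simp
    then show "exactpairs N nl Ls (insert c S) * w (insert c S)
        = pair_mass N nl Ls (insert c S) * w (insert c S) - (if S = ?A then N / 2 * w (insert c S) else 0)"
      by (simp add: left_diff_distrib)
  qed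
  also have "\<dots> = (\<Sum>S\<in>Pow ?A. pair_mass N nl Ls (insert c S) * w (insert c S)) - N / 2 * w Ls"
  proof -
    have "insert c ?A = Ls"
      using assms(2) by auto
    then show ?thesis
      using assms(1) by (simp add: sum_subtractf)
  qed
  finally show ?thesis .
qed

lemma edge_count_hitting_rescaled:
  assumes "finite Ls" "c \<in> Ls" "\<forall>l\<in>Ls. 0 < nl l"
  shows "edge_count N nl Ls w (\<lambda>T. c \<in> T) * (N - N / real (nl c))
       = (\<Sum>S\<in>Pow (Ls - {c}). pair_mass N nl Ls S * (N / real (nl c) * w (insert c S) - w Ls))"
proof -
  let ?A = "Ls - {c}" and ?X = "pair_mass N nl Ls"
  define u where "u = 1 / real (nl c)"
  have X: "(1 - u) * ?X (insert c S) = u * ?X S" if "S \<in> Pow ?A" for S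
    using that assms unfolding u_def by (intro pair_mass_insert) auto
  have Xsum: "(\<Sum>S\<in>Pow ?A. ?X S) = N\<^sup>2 / 2 * (1 - u)"
    using sum_pair_mass_avoiding[OF assms(1,2)] unfolding u_def .
  have scale: "(\<Sum>S\<in>Pow ?A. ?X (insert c S) * w (insert c S)) * (N - N * u)
      = (\<Sum>S\<in>Pow ?A. N * ((1 - u) * ?X (insert c S)) * w (insert c S))"
    unfolding sum_distrib_right by (intro sum.cong refl) (simp add: algebra_simps)
  have "edge_count N nl Ls w (\<lambda>T. c \<in> T) * (N - N * u)
      = (\<Sum>S\<in>Pow ?A. ?X (insert c S) * w (insert c S)) * (N - N * u) - N\<^sup>2 / 2 * (1 - u) * w Ls"
    unfolding edge_count_hitting[OF assms] by (simp add: power2_eq_square algebra_simps)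
  also have "\<dots> = (\<Sum>S\<in>Pow ?A. N * (u * ?X S) * w (insert c S)) - (\<Sum>S\<in>Pow ?A. ?X S) * w Ls"
    unfolding scale Xsum by (intro arg_cong2[where f = minus] sum.cong refl) (simp only: X)
  also have "\<dots> = (\<Sum>S\<in>Pow ?A. ?X S * (N * u * w (insert c S) - w Ls))"
    unfolding sum_distrib_right sum_subtractf[symmetric] by (intro sum.cong refl) (simp add: algebra_simps)
  finally show ?thesis
    by (simp add: u_def)
qed

text \<open>By retention_eq, the retention probability of layer c is below 1 exactly when the left-hand side is
  positive, i.e. when communities of c are denser inside than between each other.\<close>
lemma edge_count_density_gap:
  assumes "finite Ls" "c \<in> Ls" "\<forall>l\<in>Ls. 0 < nl l"
  shows "edge_count N nl Ls (edgeprob p) (\<lambda>T. c \<in> T) * (N - N / real (nl c))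
         - edge_count N nl Ls (edgeprob p) (\<lambda>T. c \<notin> T) * (N / real (nl c) - 1)
       = (\<Sum>S\<in>Pow (Ls - {c}). pair_mass N nl Ls S
           * ((N / real (nl c) * p c - 1) * (\<Prod>l\<in>S. 1 - p l) + (\<Prod>l\<in>Ls. 1 - p l)))"
proof -
  let ?A = "Ls - {c}" and ?X = "pair_mass N nl Ls" and ?W = "edgeprob p" and ?s = "N / real (nl c)"
  let ?F = "\<lambda>S. \<Prod>l\<in>S. 1 - p l"
  have avoid: "edge_count N nl Ls ?W (\<lambda>T. c \<notin> T) * (?s - 1) = (\<Sum>S\<in>Pow ?A. ?X S * (?W S * (?s - 1)))"
    unfolding edge_count_avoiding[OF assms] by (simp add: sum_distrib_right mult.assoc)
  have "?X S * (?s * ?W (insert c S) - ?W Ls) - ?X S * (?W S * (?s - 1))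
      = ?X S * ((?s * p c - 1) * ?F S + ?F Ls)" if "S \<in> Pow ?A" for S
  proof -
    have "c \<notin> S" "finite S"
      using that assms(1) finite_subset by auto
    then have W: "?W (insert c S) = ?W S + p c * ?F S"
      unfolding edgeprob_def by (simp add: algebra_simps)
    show ?thesis
      unfolding W unfolding edgeprob_def by (simp add: algebra_simps)
  qed
  then show ?thesis
    unfolding edge_count_hitting_rescaled[OF assms] avoid sum_subtractf[symmetric] by (rule sum.cong[OF refl])
qed

lemma edge_count_density_gap_pos:
  assumes "finite Ls" "c \<in> Ls" "\<forall>l\<in>Ls. 1 < nl l" "N \<noteq> 0" "\<forall>l\<in>Ls. 0 \<le> p l \<and> p l \<le> 1"
    and "1 < N / real (nl c) * p c"
  shows "edge_count N nl Ls (edgeprob p) (\<lambda>T. c \<notin> T) * (N / real (nl c) - 1)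
       < edge_count N nl Ls (edgeprob p) (\<lambda>T. c \<in> T) * (N - N / real (nl c))"
proof -
  let ?F = "\<lambda>S. \<Prod>l\<in>S. 1 - p l" and ?s = "N / real (nl c)"
  have F: "0 \<le> ?F S" if "S \<subseteq> Ls" for S
    using that assms(5) by (intro prod_nonneg) auto
  have "0 < (\<Sum>S\<in>Pow (Ls - {c}). pair_mass N nl Ls S * ((?s * p c - 1) * ?F S + ?F Ls))"
  proof (rule sum_pos2)
    show "0 < pair_mass N nl Ls {} * ((?s * p c - 1) * ?F {} + ?F Ls)"
      using assms(3,4,6) F[of Ls] by (intro mult_pos_pos pair_mass_pos) auto
    show "0 \<le> pair_mass N nl Ls S * ((?s * p c - 1) * ?F S + ?F Ls)" if "S \<in> Pow (Ls - {c})" for S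
    proof -
      have "0 \<le> ?F S"
        using that by (intro F) auto
      then show ?thesis
        using assms(6) F[of Ls] by (intro mult_nonneg_nonneg add_nonneg_nonneg pair_mass_nonneg) auto
    qed
  qed (use assms(1) in auto)
  moreover have "\<forall>l\<in>Ls. 0 < nl l"
    using assms(3) by auto
  ultimately show ?thesis
    using edge_count_density_gap[OF assms(1,2), of nl N p] by linarith
qed

lemma retention_eq:
  assumes "finite Ls" "0 < nl c" "N / real (nl c) \<notin> {0, 1, N}"
    and "edge_count N nl Ls (edgeprob p) (\<lambda>T. c \<in> T) \<noteq> 0"
  shows "retention N nl Ls p c
       = edge_count N nl Ls (edgeprob p) (\<lambda>T. c \<notin> T) * (N / real (nl c) - 1)
         / (edge_count N nl Ls (edgeprob p) (\<lambda>T. c \<in> T) * (N - N / real (nl c)))"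
proof -
  define ins where "ins = edge_count N nl Ls (edgeprob p) (\<lambda>T. c \<in> T)"
  define outs where "outs = edge_count N nl Ls (edgeprob p) (\<lambda>T. c \<notin> T)"
  define s where "s = N / real (nl c)"
  have "e_in N nl Ls (edgeprob p) c = ins / real (nl c)" "e_out N nl Ls (edgeprob p) c = 2 * outs / real (nl c)"
    unfolding e_in_def e_out_def ins_def outs_def edge_count_def by simp_all
  then have "retention N nl Ls p c = (2 * outs / real (nl c) / (s * (N - s))) / (ins / real (nl c) / (s * (s - 1) / 2))"
    unfolding retention_def Let_def s_def by simp
  also have "\<dots> = outs * (s - 1) / (ins * (N - s))"
  proof -
    have "s \<noteq> 0" "s - 1 \<noteq> 0" "N - s \<noteq> 0" "real (nl c) \<noteq> 0" "ins \<noteq> 0"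
      using assms unfolding s_def ins_def by auto
    then show ?thesis
      by (simp add: field_simps)
  qed
  finally show ?thesis
    unfolding ins_def outs_def s_def .
qed

lemma retention_bounds:
  assumes "finite Ls" "c \<in> Ls" "d \<in> Ls" "d \<noteq> c"
    and "\<forall>l\<in>Ls. 1 < nl l" "(\<Prod>l\<in>Ls. real (nl l)) < N" "\<forall>l\<in>Ls. 0 < p l \<and> p l \<le> 1"
    and "1 < N / real (nl c) * p c"
  shows "0 < retention N nl Ls p c" "retention N nl Ls p c < 1"
proof -
  let ?ec = "edge_count N nl Ls (edgeprob p)" and ?s = "N / real (nl c)"
  have exact: "\<forall>T\<subseteq>Ls. 0 < exactpairs N nl Ls T"
    using exactpairs_pos assms(1,5,6) by blast
  have p: "\<forall>l\<in>Ls. 0 \<le> p l \<and> p l \<le> 1"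
    using assms(7) by auto
  then have "\<forall>T\<subseteq>Ls. 0 \<le> edgeprob p T"
    by (blast intro: edgeprob_nonneg)
  then have ins: "0 < ?ec (\<lambda>T. c \<in> T)" and outs: "0 < ?ec (\<lambda>T. c \<notin> T)"
    using assms(2-4,7) by (intro edge_count_pos[OF assms(1) exact, of _ "{c}"] edge_count_pos[OF assms(1) exact, of _ "{d}"];
        auto)+
  have "0 < (\<Prod>l\<in>Ls. real (nl l))"
    using assms(5) by (intro prod_pos) auto
  then have N: "0 < N"
    using assms(6) by linarith
  have k: "1 < real (nl c)"
    using assms(2,5) by auto
  then have "?s * p c \<le> ?s"
    using N assms(2,7) by (intro mult_left_le) auto
  then have s1: "1 < ?s"
    using assms(8) by linarith
  have sN: "?s < N"
    using N k by (simp add: divide_less_eq)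
  have ret: "retention N nl Ls p c = ?ec (\<lambda>T. c \<notin> T) * (?s - 1) / (?ec (\<lambda>T. c \<in> T) * (N - ?s))"
    using s1 sN ins k assms(1) by (intro retention_eq) auto
  show "0 < retention N nl Ls p c"
    unfolding ret using ins outs s1 sN by simp
  show "retention N nl Ls p c < 1"
    unfolding ret using edge_count_density_gap_pos[OF assms(1,2,5) _ p assms(8)] ins sN N
    by (simp add: divide_less_eq_1)
qed

section \<open>Three layers\<close>

definition pattern_edges :: "real \<Rightarrow> (nat \<Rightarrow> nat) \<Rightarrow> nat set \<Rightarrow> (nat \<Rightarrow> real) \<Rightarrow> nat set \<Rightarrow> real" where
  "pattern_edges N nl Ls p T = exactpairs N nl Ls T * edgeprob p T"

lemma pattern_edges_union_inter_le:
  assumes "finite Ls" "A \<subseteq> Ls" "B \<subseteq> Ls" "0 \<le> N"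
    and "\<forall>l\<in>Ls. 0 < nl l" "\<forall>l\<in>Ls. 0 \<le> p l \<and> p l \<le> 1"
  shows "pattern_edges N nl Ls p (A \<union> B) * pattern_edges N nl Ls p (A \<inter> B)
       \<le> pattern_edges N nl Ls p A * pattern_edges N nl Ls p B"
proof (cases "A = Ls \<or> B = Ls")
  case True
  then show ?thesis
    using assms(2,3) by (auto simp: Un_absorb1 Un_absorb2 Int_absorb1 Int_absorb2 mult.commute)
next
  case False
  let ?X = "pair_mass N nl Ls" and ?W = "edgeprob p"
  have fin: "finite A" "finite B"
    using assms(1-3) finite_subset by auto
  have "A \<inter> B \<noteq> Ls"
    using False assms(2,3) by auto
  then have E: "exactpairs N nl Ls A = ?X A" "exactpairs N nl Ls B = ?X B"
      "exactpairs N nl Ls (A \<inter> B) = ?X (A \<inter> B)" "exactpairs N nl Ls (A \<union> B) \<le> ?X (A \<union> B)"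
    using False assms exactpairs_eq[of Ls _ nl N] by (auto simp: le_infI1)
  have W: "0 \<le> ?W S" if "S \<subseteq> Ls" for S
    using that assms(6) by (blast intro: edgeprob_nonneg)
  have "pattern_edges N nl Ls p (A \<union> B) * pattern_edges N nl Ls p (A \<inter> B)
      = exactpairs N nl Ls (A \<union> B) * (?X (A \<inter> B) * (?W (A \<union> B) * ?W (A \<inter> B)))"
    unfolding pattern_edges_def E(3) by (simp only: ac_simps)
  also have "\<dots> \<le> ?X (A \<union> B) * (?X (A \<inter> B) * (?W (A \<union> B) * ?W (A \<inter> B)))"
    using E(4) W[of "A \<union> B"] W[of "A \<inter> B"] assms(2,3)
    by (intro mult_right_mono mult_nonneg_nonneg pair_mass_nonneg) (simp_all add: le_supI le_infI1)
  also have "\<dots> = (?X A * ?X B) * (?W (A \<union> B) * ?W (A \<inter> B))"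
    using pair_mass_union_inter[OF assms(1) fin] by (simp only: ac_simps)
  also have "\<dots> \<le> (?X A * ?X B) * (?W A * ?W B)"
    using assms fin by (intro mult_left_mono edgeprob_union_inter_le mult_nonneg_nonneg pair_mass_nonneg) auto
  also have "\<dots> = pattern_edges N nl Ls p A * pattern_edges N nl Ls p B"
    unfolding pattern_edges_def E(1,2) by (simp only: ac_simps)
  finally show ?thesis .
qed

text \<open>The three products of pair masses all equal pair_mass {t,c,d} * pair_mass {}, so the inequality
  reduces to the subadditivity and monotonicity of the edge probability.\<close>
lemma pattern_edges_two_one_le:
  assumes "finite Ls" "t \<in> Ls" "c \<in> Ls" "d \<in> Ls" "t \<noteq> c" "t \<noteq> d" "c \<noteq> d"
    and "\<forall>l\<in>Ls. 0 < nl l" "\<forall>l\<in>Ls. 0 \<le> p l \<and> p l \<le> 1"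
  shows "pattern_edges N nl Ls p {t, c} * pattern_edges N nl Ls p {d}
       \<le> pattern_edges N nl Ls p {t} * pattern_edges N nl Ls p {c, d}
         + pattern_edges N nl Ls p {t, d} * pattern_edges N nl Ls p {c}"
proof -
  let ?X = "pair_mass N nl Ls" and ?W = "edgeprob p"
  define K where "K = ?X {t, c, d} * ?X {}"
  have exact: "exactpairs N nl Ls S = ?X S" if "S \<subseteq> {t, c, d}" "card S \<le> 2" for S
  proof -
    have "card S < card {t, c, d}"
      using that assms(5-7) by simp
    moreover have "card {t, c, d} \<le> card Ls"
      using assms(1-4) by (intro card_mono) auto
    ultimately have "S \<noteq> Ls"
      by auto
    then show ?thesis
      using that assms(1-4,8) exactpairs_eq[of Ls S nl N] by auto
  qed
  have X: "?X {t, c} * ?X {d} = K" "?X {t} * ?X {c, d} = K" "?X {t, d} * ?X {c} = K"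
    using pair_mass_union_inter[OF assms(1), of "{t, c}" "{d}" N nl]
      pair_mass_union_inter[OF assms(1), of "{t}" "{c, d}" N nl]
      pair_mass_union_inter[OF assms(1), of "{t, d}" "{c}" N nl] assms(5-7)
    by (simp_all add: K_def insert_commute)
  have "0 \<le> K"
    unfolding K_def by (intro mult_nonneg_nonneg pair_mass_nonneg)
  have p: "\<forall>l\<in>{t, c, d}. 0 \<le> p l \<and> p l \<le> 1"
    using assms(2-4,9) by auto
  have "{t} \<union> {c} = {t, c}"
    by auto
  then have "?W {t, c} * ?W {d} \<le> (?W {t} + ?W {c}) * ?W {d}"
    using edgeprob_union_le[of "{t}" "{c}" p] p by (intro mult_right_mono edgeprob_nonneg) auto
  also have "\<dots> = ?W {t} * ?W {d} + ?W {c} * ?W {d}"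
    by (simp only: distrib_right)
  also have "\<dots> \<le> ?W {t} * ?W {c, d} + ?W {c} * ?W {t, d}"
    using edgeprob_mono[of "{c, d}" "{d}" p] edgeprob_mono[of "{t, d}" "{d}" p] p
    by (intro add_mono mult_left_mono edgeprob_nonneg) auto
  finally have "K * (?W {t, c} * ?W {d}) \<le> K * (?W {t} * ?W {c, d} + ?W {c} * ?W {t, d})"
    using \<open>0 \<le> K\<close> by (rule mult_left_mono)
  then show ?thesis
    unfolding pattern_edges_def using X exact assms(5-7) by (simp add: algebra_simps)
qed

lemma sum_Pow_insert:
  assumes "finite A" "x \<notin> A"
  shows "(\<Sum>S\<in>Pow (insert x A). g S) = (\<Sum>S\<in>Pow A. g S) + (\<Sum>S\<in>Pow A. g (insert x S))"
proof -
  have "inj_on (insert x) (Pow A)"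
    using assms(2) by (auto simp: inj_on_def)
  moreover have "Pow A \<inter> insert x ` Pow A = {}"
    using assms(2) by auto
  ultimately show ?thesis
    unfolding Pow_insert using assms(1) by (simp add: sum.union_disjoint sum.reindex)
qed

lemma sum_Pow_three:
  assumes "t \<noteq> c" "t \<noteq> d" "c \<noteq> d"
  shows "(\<Sum>S\<in>Pow {t, c, d}. g S)
       = g {} + g {d} + g {c} + g {c, d} + g {t} + g {t, d} + g {t, c} + g {t, c, d}"
  using assms by (simp add: sum_Pow_insert add.assoc)

lemma three_layer_cross_less:
  assumes Ls: "Ls = {t, c, d}" and dist: "t \<noteq> c" "t \<noteq> d" "c \<noteq> d"
    and "\<forall>l\<in>Ls. 1 < nl l" "(\<Prod>l\<in>Ls. real (nl l)) < N" "\<forall>l\<in>Ls. 0 < p l \<and> p l \<le> 1" "0 \<le> q"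
  defines "w \<equiv> scale_layer d q (edgeprob p)"
  shows "edge_count N nl Ls w (\<lambda>T. t \<in> T \<and> c \<in> T) * edge_count N nl Ls w (\<lambda>T. t \<notin> T \<and> c \<notin> T)
       < edge_count N nl Ls w (\<lambda>T. t \<in> T \<and> c \<notin> T) * edge_count N nl Ls w (\<lambda>T. t \<notin> T \<and> c \<in> T)"
proof -
  let ?m = "pattern_edges N nl Ls p"
  have fin: "finite Ls" and mem: "t \<in> Ls" "c \<in> Ls" "d \<in> Ls" and PowLs: "Pow Ls = Pow {t, c, d}"
    using Ls by auto
  have pos: "\<forall>l\<in>Ls. 0 < nl l" and p: "\<forall>l\<in>Ls. 0 \<le> p l \<and> p l \<le> 1"
    using assms(5,7) by auto
  have "0 < (\<Prod>l\<in>Ls. real (nl l))"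
    using assms(5) by (intro prod_pos) auto
  then have "0 \<le> N"
    using assms(6) by linarith
  have weighted: "exactpairs N nl Ls T * w T = (if d \<in> T then q * ?m T else ?m T)" for T
    unfolding w_def scale_layer_def pattern_edges_def by simp
  have count: "edge_count N nl Ls w P
      = (if P {d} then q * ?m {d} else 0) + (if P {c} then ?m {c} else 0)
        + (if P {c, d} then q * ?m {c, d} else 0) + (if P {t} then ?m {t} else 0)
        + (if P {t, d} then q * ?m {t, d} else 0) + (if P {t, c} then ?m {t, c} else 0)
        + (if P {t, c, d} then q * ?m {t, c, d} else 0)" for P
    unfolding edge_count_eq_sum_Pow[OF fin] PowLs sum_Pow_three[OF dist] weighted
    using dist by (simp add: pattern_edges_def)
  have m_pos: "0 < ?m {t}" "0 < ?m {c}"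
    using mem assms(5-7) exactpairs_pos[OF fin _ assms(5,6)] by (simp_all add: pattern_edges_def)
  have A1: "?m {t, c} * ?m {d} \<le> ?m {t} * ?m {c, d} + ?m {t, d} * ?m {c}"
    using pattern_edges_two_one_le[OF fin mem dist pos p] .
  have "{t, d} \<union> {c, d} = {t, c, d}" "{t, d} \<inter> {c, d} = {d}"
    using dist by auto
  then have A2: "?m {t, c, d} * ?m {d} \<le> ?m {t, d} * ?m {c, d}"
    using pattern_edges_union_inter_le[OF fin _ _ \<open>0 \<le> N\<close> pos p, of "{t, d}" "{c, d}"] mem by simp
  have "(?m {t} + q * ?m {t, d}) * (?m {c} + q * ?m {c, d}) - (?m {t, c} + q * ?m {t, c, d}) * (q * ?m {d})
      = ?m {t} * ?m {c} + q * (?m {t} * ?m {c, d} + ?m {t, d} * ?m {c} - ?m {t, c} * ?m {d})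
        + q * q * (?m {t, d} * ?m {c, d} - ?m {t, c, d} * ?m {d})"
    by (simp add: algebra_simps)
  moreover have "0 < ?m {t} * ?m {c}"
    using m_pos by simp
  moreover have "0 \<le> q * (?m {t} * ?m {c, d} + ?m {t, d} * ?m {c} - ?m {t, c} * ?m {d})"
    using A1 assms(8) by simp
  moreover have "0 \<le> q * q * (?m {t, d} * ?m {c, d} - ?m {t, c, d} * ?m {d})"
    using A2 assms(8) by simp
  ultimately show ?thesis
    unfolding count using dist by simp
qed

lemma inside_share_three_layers_less:
  assumes Ls: "Ls = {t, c, d}" and dist: "t \<noteq> c" "t \<noteq> d" "c \<noteq> d"
    and nl: "\<forall>l\<in>Ls. 1 < nl l" and big: "(\<Prod>l\<in>Ls. real (nl l)) < N" and p: "\<forall>l\<in>Ls. 0 < p l \<and> p l \<le> 1"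
    and "0 \<le> q'" "0 < q" "q < 1"
  shows "inside_share N nl Ls (scale_layer d q' (edgeprob p)) t
       < inside_share N nl Ls (scale_layer c q (scale_layer d q' (edgeprob p))) t"
proof (rule inside_share_scale_layer_less)
  let ?w = "scale_layer d q' (edgeprob p)"
  have fin: "finite Ls" and mem: "{t} \<subseteq> Ls" "{c} \<subseteq> Ls"
    using Ls by auto
  have exact: "\<forall>T\<subseteq>Ls. 0 < exactpairs N nl Ls T"
    using exactpairs_pos fin nl big by blast
  have "\<forall>T\<subseteq>Ls. 0 \<le> edgeprob p T"
    using p by (blast intro: edgeprob_nonneg less_imp_le)
  then have w: "\<forall>T\<subseteq>Ls. 0 \<le> ?w T"
    using assms(8) by (simp add: scale_layer_nonneg)
  have "0 < ?w {t}" "0 < ?w {c}"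
    using Ls p dist by (simp_all add: scale_layer_def)
  then show "0 < edge_count N nl Ls ?w (\<lambda>T. c \<notin> T)" "0 < edge_count N nl Ls ?w (\<lambda>T. c \<in> T)"
    using mem dist by (intro edge_count_pos[OF fin exact w, of "{t}"] edge_count_pos[OF fin exact w, of "{c}"]; simp)+
  show "edge_count N nl Ls ?w (\<lambda>T. t \<in> T \<and> c \<in> T) * edge_count N nl Ls ?w (\<lambda>T. t \<notin> T \<and> c \<notin> T)
      < edge_count N nl Ls ?w (\<lambda>T. t \<in> T \<and> c \<notin> T) * edge_count N nl Ls ?w (\<lambda>T. t \<notin> T \<and> c \<in> T)"
    by (rule three_layer_cross_less[OF Ls dist nl big p assms(8)])
qed (use Ls assms(9,10) in auto)

lemma card_3_obtain_others:
  assumes "card A = 3" "t \<in> A"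
  obtains a b where "A = {t, a, b}" "t \<noteq> a" "t \<noteq> b" "a \<noteq> b"
proof -
  have "card (A - {t}) = 2"
    using assms by (simp add: card_Diff_singleton_if)
  then obtain a b where "A - {t} = {a, b}" "a \<noteq> b"
    by (auto simp: card_2_iff)
  then show thesis
    using assms(2) by (intro that[of a b]) auto
qed

lemma modularity_reduce_other_layers_less:
  assumes "card Ls = 3" "t \<in> Ls"
    and nl: "\<forall>l\<in>Ls. 1 < nl l" and big: "(\<Prod>l\<in>Ls. real (nl l)) < N" and p: "\<forall>l\<in>Ls. 0 < p l \<and> p l \<le> 1"
    and dense: "\<forall>c\<in>Ls - {t}. 1 < N / real (nl c) * p c"
  shows "modularity N nl Ls (edgeprob p) t < modularity N nl Ls (reduced_edgeprob N nl Ls p (Ls - {t})) t"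
proof -
  obtain a b where Ls: "Ls = {t, a, b}" and dist: "t \<noteq> a" "t \<noteq> b" "a \<noteq> b"
    using card_3_obtain_others[OF assms(1,2)] .
  have fin: "finite Ls"
    using Ls by simp
  define qa where "qa = retention N nl Ls p a"
  define qb where "qb = retention N nl Ls p b"
  define w where "w = scale_layer b qb (scale_layer a qa (edgeprob p))"
  have qa: "0 < qa" "qa < 1" and qb: "0 < qb" "qb < 1"
    unfolding qa_def qb_def using retention_bounds[OF fin _ assms(2) _ nl big p] dense Ls dist by auto
  have "Ls = {t, b, a}"
    using Ls by auto
  then have "inside_share N nl Ls (edgeprob p) t < inside_share N nl Ls w t"
    using inside_share_three_layers_less[OF Ls dist nl big p, of 1 qa]
      inside_share_three_layers_less[of Ls t b a, OF _ _ _ _ nl big p, of qa qb] dist qa qb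
    unfolding w_def by simp
  moreover have "Ls - {t} = {a, b}"
    using Ls dist by auto
  then have "reduced_edgeprob N nl Ls p (Ls - {t}) = w"
    unfolding w_def qa_def qb_def using reduced_edgeprob_two_layers[OF dist(3)] by simp
  moreover have "e_total N nl Ls (edgeprob p) \<noteq> 0" "e_total N nl Ls w \<noteq> 0"
  proof -
    have exact: "\<forall>T\<subseteq>Ls. 0 < exactpairs N nl Ls T"
      using exactpairs_pos fin nl big by blast
    have w0: "\<forall>T\<subseteq>Ls. 0 \<le> edgeprob p T"
      using p by (blast intro: edgeprob_nonneg less_imp_le)
    then have "\<forall>T\<subseteq>Ls. 0 \<le> w T"
      using qa qb by (simp add: w_def scale_layer_nonneg)
    moreover have "0 < edgeprob p {t}" "0 < w {t}"
      using Ls p dist by (simp_all add: w_def scale_layer_def)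
    ultimately show "e_total N nl Ls (edgeprob p) \<noteq> 0" "e_total N nl Ls w \<noteq> 0"
      using assms(2) e_total_pos[OF fin exact w0, of "{t}"] e_total_pos[OF fin exact, of w "{t}"] by auto
  qed
  moreover have "0 < nl t"
    using assms(2) nl by auto
  ultimately show ?thesis
    by (simp add: modularity_eq[OF fin])
qed

text \<open>The only quantitative use of the hypotheses n_l \<ge> 4, n \<ge> 2 \<Prod> n_l and p_l \<ge> 0.05: community size
  times edge probability exceeds 1, which makes the retention probabilities smaller than 1.\<close>
lemma community_degree_gt_one:
  assumes "card Ls = 3" "c \<in> Ls" "\<forall>l\<in>Ls. 4 \<le> nl l" "2 * (\<Prod>l\<in>Ls. real (nl l)) \<le> N" "0.05 \<le> p c"
  shows "1 < N / real (nl c) * p c"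
proof -
  obtain x y where Ls: "Ls = {c, x, y}" "c \<noteq> x" "c \<noteq> y" "x \<noteq> y"
    using card_3_obtain_others[OF assms(1,2)] .
  have nl: "4 \<le> real (nl c)" "4 \<le> real (nl x)" "4 \<le> real (nl y)"
    using assms(3) Ls by auto
  have "4 * 4 \<le> real (nl x) * real (nl y)"
    using nl by (intro mult_mono) auto
  then have "2 * (16 * real (nl c)) \<le> 2 * (\<Prod>l\<in>Ls. real (nl l))"
    using Ls nl by (simp add: mult.assoc)
  then have "32 \<le> N / real (nl c)"
    using assms(4) nl by (simp add: le_divide_eq)
  moreover have "1 / 20 \<le> p c"
    using assms(5) by simp
  ultimately have "32 * (1 / 20) \<le> N / real (nl c) * p c"
    by (intro mult_mono) auto
  then show ?thesis
    by linarith
qed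

theorem theorem14:
  fixes n :: nat and nl :: "nat \<Rightarrow> nat" and p :: "nat \<Rightarrow> real" and t :: nat
  assumes "\<forall>l\<in>{0,1,2}. nl l \<ge> 4"
    and "\<forall>l\<in>{0,1,2}. 0.05 \<le> p l \<and> p l \<le> 1"
    and "n \<ge> 2 * (\<Prod>l\<in>{0,1,2}. nl l)"
    and "t \<in> {0,1,2}"
  shows "modularity (real n) nl {0,1,2}
           (reduced_edgeprob (real n) nl {0,1,2} p ({0,1,2} - {t})) t
         > modularity (real n) nl {0,1,2} (edgeprob p) t"
proof (rule modularity_reduce_other_layers_less)
  have "real (2 * (\<Prod>l\<in>{0, 1, 2}. nl l)) \<le> real n"
    using assms(3) by (simp only: of_nat_le_iff)
  then have N: "2 * (\<Prod>l\<in>{0, 1, 2}. real (nl l)) \<le> real n"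
    by (simp only: of_nat_mult of_nat_prod of_nat_numeral)
  have card: "card {0, 1, 2 :: nat} = 3"
    by simp
  have "0 < (\<Prod>l\<in>{0, 1, 2}. real (nl l))"
    using assms(1) by (intro prod_pos) auto
  with N show "(\<Prod>l\<in>{0, 1, 2}. real (nl l)) < real n"
    by linarith
  show "\<forall>c\<in>{0, 1, 2} - {t}. 1 < real n / real (nl c) * p c"
  proof
    fix c assume "c \<in> {0, 1, 2} - {t}"
    then have c: "c \<in> {0, 1, 2}"
      by (rule DiffD1)
    show "1 < real n / real (nl c) * p c"
      by (rule community_degree_gt_one[where p = p, OF card c assms(1) N conjunct1[OF bspec[OF assms(2) c]]])
  qed
qed (use assms(1,2,4) in auto)

end
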